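(* Let $\mathfrak s_{nc}$ be a real semisimple Lie algebra without compact ideals, with Cartan involution $\Theta$, maximal abelian subspace $\mathfrak a$ of the $(-1)$-eigenspace of $\Theta$, restricted root space decomposition $\mathfrak s_{nc}=\mathfrak s_-\oplus\mathfrak a\oplus\mathfrak m\oplus\mathfrak s_+$ (where $\mathfrak m$ is the centralizer of $\mathfrak a$ in the fixed-point set of $\Theta$, $\mathfrak s_+$ the sum of positive root spaces and $\mathfrak s_-$ the sum of negative root spaces, for some choice of positivity). Let $\pi:\mathfrak s_{nc}\to\mathfrak{gl}(V)$ be a finite-dimensional real linear representation. Then the linear span of $\{\pi(X)v : X\in\mathfrak s_{nc},\ v\in V\}$ equals the linear span of $\{\pi(X)v : X\in\mathfrak a\oplus\mathfrak m\oplus\mathfrak s_+,\ v\in V\}$. *)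

theory Defs
  imports "HOL-Analysis.Analysis"
begin

text \<open>Finite-dimensional real Lie algebras are modelled on a type of class
euclidean_space (every finite-dimensional real vector space is of this form);
the inner product plays no role except for computing traces via the basis.\<close>

definition lie_algebra :: "('g::euclidean_space \<Rightarrow> 'g \<Rightarrow> 'g) \<Rightarrow> bool" where
  "lie_algebra br \<longleftrightarrow> bilinear br \<and> (\<forall>x. br x x = 0) \<and>
     (\<forall>x y z. br x (br y z) + br y (br z x) + br z (br x y) = 0)"

definition ltrace :: "('v::euclidean_space \<Rightarrow> 'v) \<Rightarrow> real" where
  "ltrace f = (\<Sum>b\<in>Basis. inner (f b) b)"

definition killing :: "('g::euclidean_space \<Rightarrow> 'g \<Rightarrow> 'g) \<Rightarrow> 'g \<Rightarrow> 'g \<Rightarrow> real" where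
  "killing br x y = ltrace (\<lambda>z. br x (br y z))"

definition lie_ideal :: "('g::euclidean_space \<Rightarrow> 'g \<Rightarrow> 'g) \<Rightarrow> 'g set \<Rightarrow> bool" where
  "lie_ideal br I \<longleftrightarrow> subspace I \<and> (\<forall>x y. y \<in> I \<longrightarrow> br x y \<in> I)"

definition derived_set :: "('g::euclidean_space \<Rightarrow> 'g \<Rightarrow> 'g) \<Rightarrow> 'g set \<Rightarrow> 'g set" where
  "derived_set br I = span {br x y | x y. x \<in> I \<and> y \<in> I}"

definition solvable_subalg :: "('g::euclidean_space \<Rightarrow> 'g \<Rightarrow> 'g) \<Rightarrow> 'g set \<Rightarrow> bool" where
  "solvable_subalg br I \<longleftrightarrow> (\<exists>n. (derived_set br ^^ n) I = {0})"

definition semisimple :: "('g::euclidean_space \<Rightarrow> 'g \<Rightarrow> 'g) \<Rightarrow> bool" where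
  "semisimple br \<longleftrightarrow> lie_algebra br \<and>
     (\<forall>I. lie_ideal br I \<and> solvable_subalg br I \<longrightarrow> I = {0})"

definition compact_ideal :: "('g::euclidean_space \<Rightarrow> 'g \<Rightarrow> 'g) \<Rightarrow> 'g set \<Rightarrow> bool" where
  "compact_ideal br I \<longleftrightarrow> lie_ideal br I \<and> I \<noteq> {0} \<and>
     (\<forall>x\<in>I. x \<noteq> 0 \<longrightarrow> killing br x x < 0)"

definition lie_automorphism :: "('g::euclidean_space \<Rightarrow> 'g \<Rightarrow> 'g) \<Rightarrow> ('g \<Rightarrow> 'g) \<Rightarrow> bool" where
  "lie_automorphism br \<Theta> \<longleftrightarrow> linear \<Theta> \<and> bij \<Theta> \<and> (\<forall>x y. \<Theta> (br x y) = br (\<Theta> x) (\<Theta> y))"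

definition cartan_involution :: "('g::euclidean_space \<Rightarrow> 'g \<Rightarrow> 'g) \<Rightarrow> ('g \<Rightarrow> 'g) \<Rightarrow> bool" where
  "cartan_involution br \<Theta> \<longleftrightarrow> lie_automorphism br \<Theta> \<and> (\<forall>x. \<Theta> (\<Theta> x) = x) \<and>
     (\<forall>x. x \<noteq> 0 \<longrightarrow> - killing br x (\<Theta> x) > 0)"

definition abelian_subspace :: "('g::euclidean_space \<Rightarrow> 'g \<Rightarrow> 'g) \<Rightarrow> 'g set \<Rightarrow> bool" where
  "abelian_subspace br A \<longleftrightarrow> subspace A \<and> (\<forall>x\<in>A. \<forall>y\<in>A. br x y = 0)"

definition max_abelian_in_p :: "('g::euclidean_space \<Rightarrow> 'g \<Rightarrow> 'g) \<Rightarrow> ('g \<Rightarrow> 'g) \<Rightarrow> 'g set \<Rightarrow> bool" where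
  "max_abelian_in_p br \<Theta> A \<longleftrightarrow> abelian_subspace br A \<and> A \<subseteq> {x. \<Theta> x = - x} \<and>
     (\<forall>B. abelian_subspace br B \<and> B \<subseteq> {x. \<Theta> x = - x} \<and> A \<subseteq> B \<longrightarrow> B = A)"

definition m_part :: "('g::euclidean_space \<Rightarrow> 'g \<Rightarrow> 'g) \<Rightarrow> ('g \<Rightarrow> 'g) \<Rightarrow> 'g set \<Rightarrow> 'g set" where
  "m_part br \<Theta> A = {x. \<Theta> x = x \<and> (\<forall>h\<in>A. br h x = 0)}"

text \<open>Restricted root space g_\<alpha> for a linear functional \<alpha> (only its values on a matter).\<close>
definition root_space :: "('g::euclidean_space \<Rightarrow> 'g \<Rightarrow> 'g) \<Rightarrow> 'g set \<Rightarrow> ('g \<Rightarrow> real) \<Rightarrow> 'g set" where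
  "root_space br A \<alpha> = {x. \<forall>h\<in>A. br h x = \<alpha> h *\<^sub>R x}"

definition restricted_root :: "('g::euclidean_space \<Rightarrow> 'g \<Rightarrow> 'g) \<Rightarrow> 'g set \<Rightarrow> ('g \<Rightarrow> real) \<Rightarrow> bool" where
  "restricted_root br A \<alpha> \<longleftrightarrow> linear \<alpha> \<and> (\<exists>h\<in>A. \<alpha> h \<noteq> 0) \<and> root_space br A \<alpha> \<noteq> {0}"

text \<open>A choice of positivity is given by a regular element h0 of a:
positive roots are those with \<alpha>(h0) > 0.\<close>
definition regular_element :: "('g::euclidean_space \<Rightarrow> 'g \<Rightarrow> 'g) \<Rightarrow> 'g set \<Rightarrow> 'g \<Rightarrow> bool" where
  "regular_element br A h0 \<longleftrightarrow> h0 \<in> A \<and> (\<forall>\<alpha>. restricted_root br A \<alpha> \<longrightarrow> \<alpha> h0 \<noteq> 0)"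

definition s_plus :: "('g::euclidean_space \<Rightarrow> 'g \<Rightarrow> 'g) \<Rightarrow> 'g set \<Rightarrow> 'g \<Rightarrow> 'g set" where
  "s_plus br A h0 = span (\<Union>{root_space br A \<alpha> | \<alpha>. restricted_root br A \<alpha> \<and> \<alpha> h0 > 0})"

definition lie_rep :: "('g::euclidean_space \<Rightarrow> 'g \<Rightarrow> 'g) \<Rightarrow> ('g \<Rightarrow> 'v::euclidean_space \<Rightarrow> 'v) \<Rightarrow> bool" where
  "lie_rep br \<pi> \<longleftrightarrow> (\<forall>v. linear (\<lambda>x. \<pi> x v)) \<and> (\<forall>x. linear (\<pi> x)) \<and>
     (\<forall>x y v. \<pi> (br x y) v = \<pi> x (\<pi> y v) - \<pi> y (\<pi> x v))"

end

theory Submission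
  imports Defs
begin

(*
  Let W be the span of the vectors pi(X) v with X in the minimal parabolic subalgebra
  b = a + m + s_+. The operators ad h, h in a, commute and are self-adjoint for the inner product
  B_Theta(X, Y) = - B(X, Theta Y), so s_nc is spanned by restricted root spaces. Root spaces of the
  zero root and of positive roots lie in b. For a root vector F of a negative root alpha, E = Theta F
  is a positive root vector and H = [E, F] lies in a with alpha(H) > 0, so E, F, H span a copy of
  sl(2) with E, H in b. A vector orthogonal to W is annihilated by E and H in the dual
  representation, hence (finite dimension) also by F; that is, it is orthogonal to pi(F) V.
*)

section \<open>Eigenvectors of linear operators\<close>

lemma nonneg_quadratic_imp_linear_coeff_zero:
  fixes a b :: real
  assumes "\<And>t. 0 \<le> 2 * t * a + t\<^sup>2 * b"
  shows "a = 0"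
proof (rule ccontr)
  assume a: "a \<noteq> 0"
  show False
  proof (cases "b \<le> 0")
    case True
    have "0 \<le> 2 * (-a) * a + (-a)\<^sup>2 * b" by (rule assms)
    moreover have "(-a)\<^sup>2 * b \<le> 0" using True by (simp add: mult_nonneg_nonpos)
    moreover have "2 * (-a) * a < 0" using a by (simp add: power2_eq_square[symmetric])
    ultimately show False by linarith
  next
    case False
    have "0 \<le> 2 * (-a/b) * a + (-a/b)\<^sup>2 * b" by (rule assms)
    also have "\<dots> = - (a\<^sup>2 / b)" using False by (simp add: power2_eq_square field_simps)
    moreover have "a\<^sup>2 / b > 0" using a False by simp
    ultimately show False by linarith
  qed
qed

text \<open>A maximiser of the Rayleigh quotient on the unit sphere of \<open>U\<close> is an eigenvector.\<close>

lemma selfadjoint_eigenvector_exists: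
  fixes Q :: "'a::euclidean_space \<Rightarrow> 'a \<Rightarrow> real" and T :: "'a \<Rightarrow> 'a"
  assumes Q: "bilinear Q" and Q_sym: "\<And>x y. Q x y = Q y x" and Q_pos: "\<And>x. x \<noteq> 0 \<Longrightarrow> Q x x > 0"
    and T: "linear T" and T_sym: "\<And>x y. Q (T x) y = Q x (T y)"
    and U: "subspace U" and TU: "\<And>x. x \<in> U \<Longrightarrow> T x \<in> U" and "x1 \<in> U" "x1 \<noteq> 0"
  obtains x l where "x \<in> U" "x \<noteq> 0" "T x = l *\<^sub>R x"
proof -
  define S where "S = U \<inter> sphere 0 1"
  define R where "R = (\<lambda>x. Q (T x) x / Q x x)"
  have "compact S"
    unfolding S_def using closed_Int_compact[OF closed_subspace[OF U] compact_sphere] .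
  moreover have "(1 / norm x1) *\<^sub>R x1 \<in> S"
    using \<open>x1 \<in> U\<close> \<open>x1 \<noteq> 0\<close> U by (simp add: S_def subspace_scale)
  moreover have "continuous_on S R"
  proof -
    have bb: "bounded_bilinear Q" using Q bilinear_conv_bounded_bilinear by blast
    have "continuous_on S T" using T by (simp add: linear_continuous_on linear_conv_bounded_linear)
    moreover have "Q x x \<noteq> 0" if "x \<in> S" for x
      using that Q_pos[of x] by (cases "x = 0") (auto simp: S_def)
    ultimately show ?thesis unfolding R_def
      by (intro continuous_on_divide bounded_bilinear.continuous_on[OF bb] continuous_on_id) auto
  qed
  ultimately obtain x0 where x0S: "x0 \<in> S" and max: "\<And>y. y \<in> S \<Longrightarrow> R y \<le> R x0"
    using continuous_attains_sup by (metis empty_iff)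
  define M where "M = R x0"
  have x0: "x0 \<in> U" "x0 \<noteq> 0" using x0S by (auto simp: S_def)
  have le: "Q (T y) y \<le> M * Q y y" if "y \<in> U" for y
  proof (cases "y = 0")
    case True then show ?thesis by (simp add: bilinear_rzero[OF Q])
  next
    case False
    have "(1 / norm y) *\<^sub>R y \<in> S" using that U False by (simp add: S_def subspace_scale)
    moreover have "R ((1 / norm y) *\<^sub>R y) = R y"
      using False by (simp add: R_def linear_scale[OF T] bilinear_lmul[OF Q] bilinear_rmul[OF Q])
    ultimately have "R y \<le> M" using max by (metis M_def)
    then show ?thesis using Q_pos[OF False] by (simp add: R_def divide_le_eq)
  qed
  define P where "P = (\<lambda>x y. M * Q x y - Q (T x) y)"
  have P0: "P x0 y = 0" if "y \<in> U" for y
  proof (rule nonneg_quadratic_imp_linear_coeff_zero)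
    fix t
    have "x0 + t *\<^sub>R y \<in> U" using x0 that U by (simp add: subspace_add subspace_scale)
    then have "0 \<le> P (x0 + t *\<^sub>R y) (x0 + t *\<^sub>R y)" using le by (simp add: P_def)
    also have "\<dots> = P x0 x0 + t * P x0 y + t * P y x0 + t\<^sup>2 * P y y"
      by (simp add: P_def linear_add[OF T] linear_scale[OF T] bilinear_ladd[OF Q] bilinear_radd[OF Q]
          bilinear_lmul[OF Q] bilinear_rmul[OF Q] power2_eq_square algebra_simps)
    also have "P x0 x0 = 0" using Q_pos[OF x0(2)] by (simp add: P_def M_def R_def)
    also have "P y x0 = P x0 y" using T_sym Q_sym by (simp add: P_def)
    finally show "0 \<le> 2 * t * P x0 y + t\<^sup>2 * P y y" by simp
  qed
  define y where "y = M *\<^sub>R x0 - T x0"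
  have "y \<in> U" using x0 TU U by (simp add: y_def subspace_diff subspace_scale)
  moreover have "P x0 y = Q y y" by (simp add: P_def y_def bilinear_lsub[OF Q] bilinear_lmul[OF Q])
  ultimately have "y = 0" using P0 Q_pos by force
  then show ?thesis using that[of x0 M] x0 by (simp add: y_def)
qed

text \<open>Split off an eigenvector \<open>x0\<close>; its \<open>Q\<close>-orthogonal complement in \<open>U\<close> is again \<open>T\<close>-invariant.\<close>

lemma selfadjoint_eigenvectors_span:
  fixes Q :: "'a::euclidean_space \<Rightarrow> 'a \<Rightarrow> real" and T :: "'a \<Rightarrow> 'a"
  assumes Q: "bilinear Q" and Q_sym: "\<And>x y. Q x y = Q y x" and Q_pos: "\<And>x. x \<noteq> 0 \<Longrightarrow> Q x x > 0"
    and T: "linear T" and T_sym: "\<And>x y. Q (T x) y = Q x (T y)"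
    and "subspace U" and "\<And>x. x \<in> U \<Longrightarrow> T x \<in> U"
  shows "U \<subseteq> span {x \<in> U. \<exists>l. T x = l *\<^sub>R x}"
  using assms(6,7)
proof (induction "dim U" arbitrary: U rule: less_induct)
  case less
  note U = less.prems(1) and TU = less.prems(2)
  show ?case
  proof (cases "U \<subseteq> {0}")
    case True
    then show ?thesis by (auto simp: span_zero)
  next
    case False
    then obtain x1 where "x1 \<in> U" "x1 \<noteq> 0" by blast
    then obtain x0 l where x0: "x0 \<in> U" "x0 \<noteq> 0" "T x0 = l *\<^sub>R x0"
      using selfadjoint_eigenvector_exists[OF Q Q_sym Q_pos T T_sym U TU] by metis
    define U' where "U' = {y \<in> U. Q x0 y = 0}"
    have "subspace U'"
      using U by (auto simp: U'_def subspace_def bilinear_rzero[OF Q] bilinear_radd[OF Q] bilinear_rmul[OF Q])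
    moreover have "T y \<in> U'" if "y \<in> U'" for y
      using that TU x0 T_sym[of x0 y] by (auto simp: U'_def bilinear_lmul[OF Q])
    moreover have "dim U' < dim U"
    proof (rule dim_psubset)
      have "x0 \<notin> U'" using Q_pos[OF x0(2)] by (simp add: U'_def)
      then have "U' \<subset> U" using x0 by (auto simp: U'_def)
      then show "span U' \<subset> span U" using \<open>subspace U'\<close> U by (metis span_eq_iff)
    qed
    ultimately have "U' \<subseteq> span {x \<in> U'. \<exists>l. T x = l *\<^sub>R x}"
      using less.hyps by blast
    also have "\<dots> \<subseteq> span {x \<in> U. \<exists>l. T x = l *\<^sub>R x}"
      by (rule span_mono) (auto simp: U'_def)
    finally have U'_span: "U' \<subseteq> span {x \<in> U. \<exists>l. T x = l *\<^sub>R x}" .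
    have x0_span: "x0 \<in> span {x \<in> U. \<exists>l. T x = l *\<^sub>R x}"
      using x0 by (intro span_base) blast
    show ?thesis
    proof
      fix y assume "y \<in> U"
      define a where "a = Q x0 y / Q x0 x0"
      have "y - a *\<^sub>R x0 \<in> U'"
        using \<open>y \<in> U\<close> x0 U Q_pos[OF x0(2)]
        by (simp add: U'_def a_def subspace_diff subspace_scale bilinear_rsub[OF Q] bilinear_rmul[OF Q])
      then have "(y - a *\<^sub>R x0) + a *\<^sub>R x0 \<in> span {x \<in> U. \<exists>l. T x = l *\<^sub>R x}"
        using U'_span x0_span by (blast intro: span_add span_mul)
      then show "y \<in> span {x \<in> U. \<exists>l. T x = l *\<^sub>R x}" by simp
    qed
  qed
qed

text \<open>Simultaneous diagonalisation: split \<open>U\<close> into the eigenspaces of a member of the family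
  that does not act on \<open>U\<close> as a scalar; these are proper subspaces, invariant under the whole family.\<close>

lemma commuting_selfadjoint_joint_eigenvectors_span:
  fixes Q :: "'a::euclidean_space \<Rightarrow> 'a \<Rightarrow> real" and T :: "'i \<Rightarrow> 'a \<Rightarrow> 'a"
  assumes Q: "bilinear Q" and Q_sym: "\<And>x y. Q x y = Q y x" and Q_pos: "\<And>x. x \<noteq> 0 \<Longrightarrow> Q x x > 0"
    and T: "\<And>i. i \<in> I \<Longrightarrow> linear (T i)"
    and T_sym: "\<And>i x y. i \<in> I \<Longrightarrow> Q (T i x) y = Q x (T i y)"
    and T_comm: "\<And>i j x. i \<in> I \<Longrightarrow> j \<in> I \<Longrightarrow> T i (T j x) = T j (T i x)"
    and "subspace U" and "\<And>i x. i \<in> I \<Longrightarrow> x \<in> U \<Longrightarrow> T i x \<in> U"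
  shows "U \<subseteq> span {x \<in> U. \<forall>i\<in>I. \<exists>l. T i x = l *\<^sub>R x}"
  using assms(7,8)
proof (induction "dim U" arbitrary: U rule: less_induct)
  case less
  note U = less.prems(1) and TU = less.prems(2)
  show ?case
  proof (cases "\<forall>i\<in>I. \<exists>l. \<forall>x\<in>U. T i x = l *\<^sub>R x")
    case True
    then show ?thesis by (blast intro: span_base)
  next
    case False
    then obtain i where i: "i \<in> I" and not_scalar: "\<And>l. \<exists>x\<in>U. T i x \<noteq> l *\<^sub>R x" by blast
    have eigenspace_span: "{x \<in> U. T i x = l *\<^sub>R x} \<subseteq> span {x \<in> U. \<forall>i\<in>I. \<exists>l. T i x = l *\<^sub>R x}" for l
    proof -
      define U\<^sub>l where "U\<^sub>l = {x \<in> U. T i x = l *\<^sub>R x}"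
      have "subspace U\<^sub>l"
        using U T[OF i] by (auto simp: U\<^sub>l_def subspace_def linear_0 linear_add linear_scale algebra_simps)
      moreover have "T j x \<in> U\<^sub>l" if "j \<in> I" "x \<in> U\<^sub>l" for j x
        using that TU T_comm[OF i, of j x] T by (auto simp: U\<^sub>l_def linear_scale)
      moreover have "dim U\<^sub>l < dim U"
      proof (rule dim_psubset)
        have "U\<^sub>l \<subset> U" using not_scalar[of l] by (auto simp: U\<^sub>l_def)
        then show "span U\<^sub>l \<subset> span U" using \<open>subspace U\<^sub>l\<close> U by (metis span_eq_iff)
      qed
      ultimately have "U\<^sub>l \<subseteq> span {x \<in> U\<^sub>l. \<forall>i\<in>I. \<exists>l. T i x = l *\<^sub>R x}"
        using less.hyps by blast
      also have "\<dots> \<subseteq> span {x \<in> U. \<forall>i\<in>I. \<exists>l. T i x = l *\<^sub>R x}"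
        by (rule span_mono) (auto simp: U\<^sub>l_def)
      finally show ?thesis by (simp add: U\<^sub>l_def)
    qed
    have "U \<subseteq> span {x \<in> U. \<exists>l. T i x = l *\<^sub>R x}"
      using selfadjoint_eigenvectors_span[OF Q Q_sym Q_pos T[OF i] T_sym[OF i] U] TU i by blast
    also have "\<dots> \<subseteq> span {x \<in> U. \<forall>i\<in>I. \<exists>l. T i x = l *\<^sub>R x}"
      using eigenspace_span by (intro span_minimal) (auto simp: subspace_span)
    finally show ?thesis .
  qed
qed

fun eigen_annihilator :: "('v::real_vector \<Rightarrow> 'v) \<Rightarrow> (nat \<Rightarrow> real) \<Rightarrow> nat \<Rightarrow> 'v \<Rightarrow> 'v" where
  "eigen_annihilator h lam 0 = (\<lambda>v. v)"
| "eigen_annihilator h lam (Suc n) =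
     (\<lambda>v. h (eigen_annihilator h lam n v) - lam n *\<^sub>R eigen_annihilator h lam n v)"

lemma linear_eigen_annihilator: "linear h \<Longrightarrow> linear (eigen_annihilator h lam n)"
proof (induction n)
  case (Suc n)
  then show ?case
    by (intro linearI) (simp_all add: linear_add linear_scale algebra_simps)
qed (simp add: linear_id[unfolded id_def])

lemma eigen_annihilator_eigenvector:
  fixes k :: nat
  assumes h: "linear h" and "h x = lam k *\<^sub>R x"
  shows "eigen_annihilator h lam n x = (if k < n then 0 else (\<Prod>j<n. lam k - lam j) *\<^sub>R x)"
proof (induction n)
  case (Suc n)
  show ?case
  proof (cases "k < n")
    case True
    then show ?thesis using Suc.IH by (simp add: linear_0[OF h])
  next
    case False
    then have "eigen_annihilator h lam (Suc n) x
        = (\<Prod>j<n. lam k - lam j) *\<^sub>R (lam k *\<^sub>R x) - lam n *\<^sub>R (\<Prod>j<n. lam k - lam j) *\<^sub>R x"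
      using Suc.IH assms by (simp add: linear_scale[OF h])
    also have "\<dots> = (\<Prod>j<Suc n. lam k - lam j) *\<^sub>R x"
      by (simp add: algebra_simps)
    finally show ?thesis using False by (cases "k = n") auto
  qed
qed simp

lemma eigenvector_notin_span_earlier:
  fixes x :: "nat \<Rightarrow> 'v::real_vector" and lam :: "nat \<Rightarrow> real"
  assumes h: "linear h" and x: "\<And>k. x k \<noteq> 0" "\<And>k. h (x k) = lam k *\<^sub>R x k" and "inj lam"
  shows "x n \<notin> span (x ` {..<n})"
proof
  assume "x n \<in> span (x ` {..<n})"
  moreover have "eigen_annihilator h lam n y = 0" if y: "y \<in> x ` {..<n}" for y
  proof -
    obtain k where "k < n" "y = x k" using y by blast
    then show ?thesis using eigen_annihilator_eigenvector[where lam=lam and k=k, OF h x(2)] by simp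
  qed
  ultimately have "eigen_annihilator h lam n (x n) = 0"
    using linear_eq_0_on_span[OF linear_eigen_annihilator[OF h]] by blast
  moreover have "(\<Prod>j<n. lam n - lam j) \<noteq> 0"
    using \<open>inj lam\<close> by (auto dest: injD)
  ultimately show False
    using eigen_annihilator_eigenvector[where lam=lam and k=n and n=n, OF h x(2)] x(1)[of n] by simp
qed

lemma finite_eigenvalues:
  fixes h :: "'v::euclidean_space \<Rightarrow> 'v"
  assumes h: "linear h"
  shows "finite {l. \<exists>x. x \<noteq> 0 \<and> h x = l *\<^sub>R x}"
proof (rule ccontr)
  assume "infinite {l. \<exists>x. x \<noteq> 0 \<and> h x = l *\<^sub>R x}"
  then obtain lam :: "nat \<Rightarrow> real"
    where "inj lam" and "range lam \<subseteq> {l. \<exists>x. x \<noteq> 0 \<and> h x = l *\<^sub>R x}"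
    using infinite_countable_subset by blast
  then have "\<forall>k. \<exists>x. x \<noteq> 0 \<and> h x = lam k *\<^sub>R x" by blast
  then obtain x where x: "\<And>k. x k \<noteq> 0" "\<And>k. h (x k) = lam k *\<^sub>R x k"
    by metis
  have new: "x n \<notin> span (x ` {..<n})" for n
    by (rule eigenvector_notin_span_earlier[OF h x \<open>inj lam\<close>])
  have "independent (x ` {..<n}) \<and> card (x ` {..<n}) = n" for n
  proof (induction n)
    case (Suc n)
    have "x n \<notin> x ` {..<n}" using new[of n] by (metis span_base)
    then show ?case
      using Suc new[of n] by (simp add: lessThan_Suc independent_insertI)
  qed (simp add: independent_empty)
  then show False
    using independent_bound[of "x ` {..<Suc DIM('v)}"] by simp
qed

section \<open>sl(2)-triples in representations\<close>

lemma lie_rep_bracket: "lie_rep br \<rho> \<Longrightarrow> \<rho> (br x y) v = \<rho> x (\<rho> y v) - \<rho> y (\<rho> x v)"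
  by (simp add: lie_rep_def)

lemma lie_rep_add: "lie_rep br \<rho> \<Longrightarrow> \<rho> (x + y) v = \<rho> x v + \<rho> y v"
  unfolding lie_rep_def using linear_add by blast

lemma lie_rep_scaleR: "lie_rep br \<rho> \<Longrightarrow> \<rho> (c *\<^sub>R x) v = c *\<^sub>R \<rho> x v"
  unfolding lie_rep_def using linear_scale by blast

text \<open>Otherwise the vectors \<open>F\<^sup>k (F w)\<close> would all be nonzero (\<open>E\<close> maps each to a nonzero multiple
  of its predecessor) and would be eigenvectors of \<open>H\<close> for the infinitely many eigenvalues \<open>(k + 1) c\<close>.\<close>

lemma lie_rep_sl2_lowering_kills:
  fixes \<rho> :: "'g::euclidean_space \<Rightarrow> 'v::euclidean_space \<Rightarrow> 'v"
  assumes \<rho>: "lie_rep br \<rho>" and EF: "br E F = H" and HF: "br H F = c *\<^sub>R F" and "c \<noteq> 0"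
    and w: "\<rho> E w = 0" "\<rho> H w = 0"
  shows "\<rho> F w = 0"
proof (rule ccontr)
  define e f h where "e = \<rho> E" and "f = \<rho> F" and "h = \<rho> H"
  have lin: "linear e" "linear f" "linear h"
    using \<rho> by (simp_all add: lie_rep_def e_def f_def h_def)
  have ef: "e (f v) = f (e v) + h v" for v
    using lie_rep_bracket[OF \<rho>, of E F v] by (simp add: EF e_def f_def h_def)
  have hf: "h (f v) = f (h v) + c *\<^sub>R f v" for v
    using lie_rep_bracket[OF \<rho>, of H F v] lie_rep_scaleR[OF \<rho>, of c F v]
    by (simp add: HF f_def h_def)
  assume "\<rho> F w \<noteq> 0"
  define u where "u = f w"
  have "u \<noteq> 0" using \<open>\<rho> F w \<noteq> 0\<close> by (simp add: u_def f_def)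
  have e_u: "e u = 0" and h_u: "h u = c *\<^sub>R u"
    using w ef[of w] hf[of w] by (simp_all add: u_def e_def h_def linear_0[OF lin(2)])
  have h_pow: "h ((f ^^ k) u) = (c * (real k + 1)) *\<^sub>R (f ^^ k) u" for k
  proof (induction k)
    case (Suc k)
    have "h ((f ^^ Suc k) u) = f (h ((f ^^ k) u)) + c *\<^sub>R f ((f ^^ k) u)"
      by (simp add: hf)
    also have "\<dots> = (c * (real k + 1) + c) *\<^sub>R f ((f ^^ k) u)"
      by (simp only: Suc.IH linear_scale[OF lin(2)] scaleR_add_left)
    finally show ?case by (simp add: algebra_simps)
  qed (simp add: h_u)
  have e_pow: "e ((f ^^ Suc k) u) = (c * (real k + 1) * (real k + 2) / 2) *\<^sub>R (f ^^ k) u" for k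
  proof (induction k)
    case (Suc k)
    have "e ((f ^^ Suc (Suc k)) u) = f (e ((f ^^ Suc k) u)) + h ((f ^^ Suc k) u)"
      by (simp add: ef)
    also have "\<dots> = f ((c * (real k + 1) * (real k + 2) / 2) *\<^sub>R (f ^^ k) u)
        + (c * (real (Suc k) + 1)) *\<^sub>R (f ^^ Suc k) u"
      by (simp only: Suc.IH h_pow)
    also have "\<dots> = (c * (real k + 1) * (real k + 2) / 2 + c * (real (Suc k) + 1)) *\<^sub>R (f ^^ Suc k) u"
      by (simp add: linear_scale[OF lin(2)] scaleR_add_left)
    finally show ?case by (simp add: field_simps)
  qed (simp add: ef e_u h_u linear_0[OF lin(2)])
  have nonzero: "(f ^^ k) u \<noteq> 0" for k
  proof (induction k)
    case (Suc k)
    have "c * (real k + 1) * (real k + 2) / 2 \<noteq> 0" using \<open>c \<noteq> 0\<close> by simp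
    then have "e ((f ^^ Suc k) u) \<noteq> 0" unfolding e_pow using Suc.IH by simp
    then show ?case by (auto simp: linear_0[OF lin(1)])
  qed (simp add: \<open>u \<noteq> 0\<close>)
  have "range (\<lambda>k. c * (real k + 1)) \<subseteq> {l. \<exists>x. x \<noteq> 0 \<and> h x = l *\<^sub>R x}"
    using nonzero h_pow by blast
  moreover have "infinite (range (\<lambda>k. c * (real k + 1)))"
    using \<open>c \<noteq> 0\<close> by (intro range_inj_infinite) (auto intro: injI)
  ultimately show False
    using finite_eigenvalues[OF lin(3)] finite_subset by blast
qed

definition dual_rep :: "('g \<Rightarrow> 'v::euclidean_space \<Rightarrow> 'v) \<Rightarrow> 'g \<Rightarrow> 'v \<Rightarrow> 'v" where
  "dual_rep \<pi> x v = - adjoint (\<pi> x) v"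

lemma inner_dual_rep: "lie_rep br \<pi> \<Longrightarrow> u \<bullet> dual_rep \<pi> x w = - (\<pi> x u \<bullet> w)"
  by (simp add: dual_rep_def lie_rep_def adjoint_works)

lemma lie_rep_dual_rep:
  assumes \<pi>: "lie_rep br \<pi>"
  shows "lie_rep br (dual_rep \<pi>)"
proof -
  have "linear (\<lambda>x. dual_rep \<pi> x v)" for v
    by (intro linearI; rule vector_eq_ldot[THEN iffD1])
      (simp_all add: inner_dual_rep[OF \<pi>] lie_rep_add[OF \<pi>] lie_rep_scaleR[OF \<pi>] inner_add_left inner_add_right)
  moreover have "linear (dual_rep \<pi> x)" for x
    using \<pi> by (simp add: dual_rep_def[abs_def] lie_rep_def adjoint_linear linear_compose_neg)
  moreover have "dual_rep \<pi> (br x y) v = dual_rep \<pi> x (dual_rep \<pi> y v) - dual_rep \<pi> y (dual_rep \<pi> x v)"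
    for x y v
    by (rule vector_eq_ldot[THEN iffD1])
      (simp add: inner_dual_rep[OF \<pi>] lie_rep_bracket[OF \<pi>] inner_diff_left inner_diff_right)
  ultimately show ?thesis by (simp add: lie_rep_def)
qed

text \<open>Dually: a vector orthogonal to the images of \<open>E\<close> and \<open>H\<close> is killed by \<open>E\<close> and \<open>H\<close> in the
  dual representation, hence by \<open>F\<close>, so it is orthogonal to the image of \<open>F\<close>.\<close>

lemma lie_rep_sl2_image_in_subspace:
  fixes \<pi> :: "'g::euclidean_space \<Rightarrow> 'v::euclidean_space \<Rightarrow> 'v"
  assumes \<pi>: "lie_rep br \<pi>" and EF: "br E F = H" and HF: "br H F = c *\<^sub>R F" and "c \<noteq> 0"
    and W: "subspace W" and E_W: "\<And>v. \<pi> E v \<in> W" and H_W: "\<And>v. \<pi> H v \<in> W"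
  shows "\<pi> F v \<in> W"
proof -
  have "w \<bullet> \<pi> F v = 0" if w: "w \<in> W\<^sup>\<bottom>" for w
  proof -
    have killed: "dual_rep \<pi> X w = 0" if "\<And>u. \<pi> X u \<in> W" for X
    proof (rule vector_eq_ldot[THEN iffD1], rule allI)
      fix u
      have "\<pi> X u \<bullet> w = 0" using w that by (simp add: orthogonal_comp_def orthogonal_def)
      then show "u \<bullet> dual_rep \<pi> X w = u \<bullet> 0" by (simp add: inner_dual_rep[OF \<pi>])
    qed
    have "dual_rep \<pi> F w = 0"
      using lie_rep_sl2_lowering_kills[OF lie_rep_dual_rep[OF \<pi>] EF HF \<open>c \<noteq> 0\<close>]
        killed[OF E_W] killed[OF H_W] by blast
    then show ?thesis
      using inner_dual_rep[OF \<pi>, of v F w] by (simp add: inner_commute)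
  qed
  then have "\<pi> F v \<in> W\<^sup>\<bottom>\<^sup>\<bottom>"
    by (simp add: orthogonal_comp_def orthogonal_def)
  then show ?thesis
    using orthogonal_comp_self[OF W] by simp
qed

section \<open>Killing form and Cartan involution\<close>

lemma lie_algebra_bilinear: "lie_algebra br \<Longrightarrow> bilinear br"
  by (simp add: lie_algebra_def)

lemma lie_algebra_linear_right: "lie_algebra br \<Longrightarrow> linear (br x)"
  using lie_algebra_bilinear bilinear_def by blast

lemma lie_algebra_anticomm:
  assumes "lie_algebra br"
  shows "br y x = - br x y"
proof -
  have b: "bilinear br" using assms by (rule lie_algebra_bilinear)
  have "br (x + y) (x + y) = 0" "br x x = 0" "br y y = 0"
    using assms by (auto simp: lie_algebra_def)
  then have "br y x + br x y = 0"
    by (simp add: bilinear_ladd[OF b] bilinear_radd[OF b])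
  then show ?thesis by (simp add: eq_neg_iff_add_eq_0)
qed

lemma lie_algebra_leibniz:
  assumes la: "lie_algebra br"
  shows "br x (br y z) = br (br x y) z + br y (br x z)"
proof -
  have "br x (br y z) + br y (br z x) + br z (br x y) = 0"
    using la by (simp add: lie_algebra_def)
  moreover have "br y (br z x) = - br y (br x z)"
    using lie_algebra_anticomm[OF la, of x z] bilinear_rneg[OF lie_algebra_bilinear[OF la]] by simp
  moreover have "br z (br x y) = - br (br x y) z"
    by (rule lie_algebra_anticomm[OF la])
  ultimately show ?thesis by (simp add: algebra_simps)
qed

lemma lie_algebra_ad_bracket:
  "lie_algebra br \<Longrightarrow> br (br x y) z = br x (br y z) - br y (br x z)"
  using lie_algebra_leibniz[of br x y z] by simp

lemma lie_algebra_ad_commute: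
  assumes la: "lie_algebra br" and "br h h' = 0"
  shows "br h (br h' x) = br h' (br h x)"
  using lie_algebra_leibniz[OF la, of h h' x] assms(2) bilinear_lzero[OF lie_algebra_bilinear[OF la]]
  by simp

lemma ltrace_commute:
  fixes f g :: "'v::euclidean_space \<Rightarrow> 'v"
  assumes "linear f" "linear g"
  shows "ltrace (\<lambda>x. f (g x)) = ltrace (\<lambda>x. g (f x))"
proof -
  have expand: "p (q b) = (\<Sum>c\<in>Basis. (q b \<bullet> c) *\<^sub>R p c)" if "linear p" for p q :: "'v \<Rightarrow> 'v" and b
    using that by (subst euclidean_representation[of "q b", symmetric]) (simp add: linear_sum linear_scale)
  have "ltrace (\<lambda>x. f (g x)) = (\<Sum>b\<in>Basis. \<Sum>c\<in>Basis. (g b \<bullet> c) * (f c \<bullet> b))"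
    unfolding ltrace_def expand[OF assms(1)] by (simp add: inner_sum_left)
  also have "\<dots> = (\<Sum>c\<in>Basis. \<Sum>b\<in>Basis. (g b \<bullet> c) * (f c \<bullet> b))"
    by (rule sum.swap)
  also have "\<dots> = ltrace (\<lambda>x. g (f x))"
    unfolding ltrace_def expand[OF assms(2)] by (simp add: inner_sum_left mult.commute)
  finally show ?thesis .
qed

lemma ltrace_diff: "ltrace (\<lambda>x. f x - g x) = ltrace f - ltrace g"
  by (simp add: ltrace_def inner_diff_left sum_subtractf)

lemma killing_commute: "lie_algebra br \<Longrightarrow> killing br x y = killing br y x"
  unfolding killing_def by (intro ltrace_commute lie_algebra_linear_right)

lemma bilinear_killing:
  assumes la: "lie_algebra br"
  shows "bilinear (killing br)"
  using lie_algebra_bilinear[OF la]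
  by (auto intro!: linearI simp: bilinear_def killing_def ltrace_def bilinear_ladd bilinear_radd
      bilinear_lmul bilinear_rmul inner_add_left sum.distrib sum_distrib_left)

lemma killing_invariant:
  assumes la: "lie_algebra br"
  shows "killing br (br x y) z = killing br x (br y z)"
proof -
  have lin: "linear (br u)" for u by (rule lie_algebra_linear_right[OF la])
  have "killing br (br x y) z
      = ltrace (\<lambda>w. br x (br y (br z w))) - ltrace (\<lambda>w. br y (br x (br z w)))"
    unfolding killing_def lie_algebra_ad_bracket[OF la, of x y] by (simp add: ltrace_diff)
  also have "ltrace (\<lambda>w. br y (br x (br z w))) = ltrace (\<lambda>w. br x (br z (br y w)))"
    using ltrace_commute[of "br y" "\<lambda>w. br x (br z w)"] lin
    by (simp add: linear_compose[unfolded o_def])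
  also have "ltrace (\<lambda>w. br x (br y (br z w))) - ltrace (\<lambda>w. br x (br z (br y w)))
      = killing br x (br y z)"
    unfolding killing_def lie_algebra_ad_bracket[OF la, of y z]
    by (simp add: ltrace_diff linear_diff[OF lin])
  finally show ?thesis .
qed

lemma cartan_involution_linear: "cartan_involution br \<Theta> \<Longrightarrow> linear \<Theta>"
  by (simp add: cartan_involution_def lie_automorphism_def)

lemma cartan_involution_involutive: "cartan_involution br \<Theta> \<Longrightarrow> \<Theta> (\<Theta> x) = x"
  by (simp add: cartan_involution_def)

lemma cartan_involution_bracket: "cartan_involution br \<Theta> \<Longrightarrow> \<Theta> (br x y) = br (\<Theta> x) (\<Theta> y)"
  by (simp add: cartan_involution_def lie_automorphism_def)

lemma killing_cartan_involution:
  assumes la: "lie_algebra br" and ci: "cartan_involution br \<Theta>"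
  shows "killing br (\<Theta> x) (\<Theta> y) = killing br x y"
proof -
  note lin = cartan_involution_linear[OF ci] lie_algebra_linear_right[OF la]
  have "killing br (\<Theta> x) (\<Theta> y) = ltrace (\<lambda>z. \<Theta> (br x (br y (\<Theta> z))))"
    by (simp add: killing_def cartan_involution_bracket[OF ci] cartan_involution_involutive[OF ci])
  also have "\<dots> = ltrace (\<lambda>z. br x (br y (\<Theta> (\<Theta> z))))"
  proof (rule ltrace_commute)
    show "linear (\<lambda>z. br x (br y (\<Theta> z)))"
      using linear_compose[OF linear_compose[OF lin(1) lin(2)] lin(2)] by (simp add: o_def)
  qed (rule lin(1))
  also have "\<dots> = killing br x y"
    by (simp add: killing_def cartan_involution_involutive[OF ci])
  finally show ?thesis .
qed

definition cartan_form :: "('g::euclidean_space \<Rightarrow> 'g \<Rightarrow> 'g) \<Rightarrow> ('g \<Rightarrow> 'g) \<Rightarrow> 'g \<Rightarrow> 'g \<Rightarrow> real" where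
  "cartan_form br \<Theta> x y = - killing br x (\<Theta> y)"

lemma cartan_form_pos: "cartan_involution br \<Theta> \<Longrightarrow> x \<noteq> 0 \<Longrightarrow> cartan_form br \<Theta> x x > 0"
  by (simp add: cartan_form_def cartan_involution_def)

lemma cartan_form_commute:
  assumes la: "lie_algebra br" and ci: "cartan_involution br \<Theta>"
  shows "cartan_form br \<Theta> x y = cartan_form br \<Theta> y x"
  using killing_cartan_involution[OF la ci, of y "\<Theta> x"] killing_commute[OF la, of x "\<Theta> y"]
  by (simp add: cartan_form_def cartan_involution_involutive[OF ci])

lemma bilinear_cartan_form:
  assumes la: "lie_algebra br" and ci: "cartan_involution br \<Theta>"
  shows "bilinear (cartan_form br \<Theta>)"
  using bilinear_killing[OF la] cartan_involution_linear[OF ci]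
  by (auto intro!: linearI simp: bilinear_def cartan_form_def linear_add linear_scale
      bilinear_ladd bilinear_radd bilinear_lmul bilinear_rmul)

lemma cartan_form_ad_selfadjoint:
  assumes la: "lie_algebra br" and ci: "cartan_involution br \<Theta>" and "\<Theta> h = - h"
  shows "cartan_form br \<Theta> (br h x) y = cartan_form br \<Theta> x (br h y)"
proof -
  have "cartan_form br \<Theta> (br h x) y = killing br (br x h) (\<Theta> y)"
    using lie_algebra_anticomm[OF la, of x h] bilinear_lneg[OF bilinear_killing[OF la]]
    by (simp add: cartan_form_def)
  also have "\<dots> = killing br x (br h (\<Theta> y))"
    by (rule killing_invariant[OF la])
  also have "\<dots> = cartan_form br \<Theta> x (br h y)"
    using \<open>\<Theta> h = - h\<close> bilinear_lneg[OF lie_algebra_bilinear[OF la]]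
      bilinear_rneg[OF bilinear_killing[OF la]]
    by (simp add: cartan_form_def cartan_involution_bracket[OF ci])
  finally show ?thesis .
qed

section \<open>Restricted roots\<close>

definition minimal_parabolic :: "('g::euclidean_space \<Rightarrow> 'g \<Rightarrow> 'g) \<Rightarrow> ('g \<Rightarrow> 'g) \<Rightarrow> 'g set \<Rightarrow> 'g \<Rightarrow> 'g set"
  where "minimal_parabolic br \<Theta> A h0 = A + m_part br \<Theta> A + s_plus br A h0"

locale cartan_setting =
  fixes br :: "'g::euclidean_space \<Rightarrow> 'g \<Rightarrow> 'g" and \<Theta> :: "'g \<Rightarrow> 'g" and A :: "'g set"
  assumes lie_algebra: "lie_algebra br"
    and cartan_involution: "cartan_involution br \<Theta>"
    and max_abelian: "max_abelian_in_p br \<Theta> A"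
begin

lemmas bilinear_br = lie_algebra_bilinear[OF lie_algebra]
lemmas linear_\<Theta> = cartan_involution_linear[OF cartan_involution]
lemmas \<Theta>_involutive = cartan_involution_involutive[OF cartan_involution]
lemmas \<Theta>_bracket = cartan_involution_bracket[OF cartan_involution]

lemma subspace_A: "subspace A"
  using max_abelian by (simp add: max_abelian_in_p_def abelian_subspace_def)

lemma A_abelian: "h \<in> A \<Longrightarrow> h' \<in> A \<Longrightarrow> br h h' = 0"
  using max_abelian by (simp add: max_abelian_in_p_def abelian_subspace_def)

lemma \<Theta>_A: "h \<in> A \<Longrightarrow> \<Theta> h = - h"
  using max_abelian by (auto simp: max_abelian_in_p_def)

lemma \<Theta>_root_space:
  assumes "x \<in> root_space br A \<alpha>"
  shows "\<Theta> x \<in> root_space br A (\<lambda>h. - \<alpha> h)"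
  unfolding root_space_def
proof (intro CollectI ballI)
  fix h assume "h \<in> A"
  have "br h (\<Theta> x) = \<Theta> (br (\<Theta> h) x)"
    by (simp add: \<Theta>_bracket \<Theta>_involutive)
  also have "\<dots> = - \<alpha> h *\<^sub>R \<Theta> x"
    using assms \<open>h \<in> A\<close>
    by (simp add: root_space_def \<Theta>_A bilinear_lneg[OF bilinear_br] linear_neg[OF linear_\<Theta>]
        linear_scale[OF linear_\<Theta>])
  finally show "br h (\<Theta> x) = - \<alpha> h *\<^sub>R \<Theta> x" .
qed

lemma centralizer_in_p_subset_A:
  assumes y: "\<Theta> y = - y" and centralizes: "\<And>h. h \<in> A \<Longrightarrow> br h y = 0"
  shows "y \<in> A"
proof -
  define B where "B = span (insert y A)"
  have "abelian_subspace br B"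
    unfolding abelian_subspace_def
  proof (intro conjI ballI)
    show "subspace B" by (simp add: B_def subspace_span)
  next
    fix x z assume "x \<in> B" "z \<in> B"
    have "bilinear (\<lambda>x y. 0 :: 'g)" by (simp add: bilinear_def linear_zero)
    then show "br x z = 0"
    proof (rule bilinear_eq[OF bilinear_br _ _ _ \<open>x \<in> B\<close> \<open>z \<in> B\<close>])
      fix u u' assume "u \<in> insert y A" "u' \<in> insert y A"
      then show "br u u' = 0"
        using A_abelian centralizes lie_algebra_anticomm[OF lie_algebra, of y] lie_algebra
        by (auto simp: lie_algebra_def)
    qed (simp_all add: B_def)
  qed
  moreover have "B \<subseteq> {x. \<Theta> x = - x}"
  proof -
    have "subspace {x. \<Theta> x = - x}"
      by (auto simp: subspace_def linear_0[OF linear_\<Theta>] linear_add[OF linear_\<Theta>] linear_scale[OF linear_\<Theta>])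
    then show ?thesis
      unfolding B_def using y \<Theta>_A by (intro span_minimal) auto
  qed
  moreover have "A \<subseteq> B" by (auto simp: B_def intro: span_base)
  ultimately have "B = A" using max_abelian by (simp add: max_abelian_in_p_def)
  moreover have "y \<in> B" by (simp add: B_def span_base)
  ultimately show ?thesis by simp
qed

text \<open>Split \<open>x\<close> into its \<open>\<Theta>\<close>-eigencomponents; the \<open>(-1)\<close>-component lies in \<open>A\<close> by maximality.\<close>

lemma zero_root_space_subset:
  assumes x: "x \<in> root_space br A \<alpha>" and zero: "\<forall>h\<in>A. \<alpha> h = 0"
  shows "x \<in> A + m_part br \<Theta> A"
proof -
  have x_centralizes: "br h x = 0" if "h \<in> A" for h
    using x zero that by (simp add: root_space_def)
  have \<Theta>x_centralizes: "br h (\<Theta> x) = 0" if "h \<in> A" for h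
    using \<Theta>_root_space[OF x] zero that by (simp add: root_space_def)
  define x\<^sub>p x\<^sub>k where "x\<^sub>p = (1/2) *\<^sub>R (x - \<Theta> x)" and "x\<^sub>k = (1/2) *\<^sub>R (x + \<Theta> x)"
  have "x\<^sub>p \<in> A"
  proof (rule centralizer_in_p_subset_A)
    show "\<Theta> x\<^sub>p = - x\<^sub>p"
      by (simp add: x\<^sub>p_def linear_scale[OF linear_\<Theta>] linear_diff[OF linear_\<Theta>] \<Theta>_involutive algebra_simps)
    show "br h x\<^sub>p = 0" if "h \<in> A" for h
      using x_centralizes[OF that] \<Theta>x_centralizes[OF that]
      by (simp add: x\<^sub>p_def bilinear_rmul[OF bilinear_br] bilinear_rsub[OF bilinear_br])
  qed
  moreover have "x\<^sub>k \<in> m_part br \<Theta> A"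
    using x_centralizes \<Theta>x_centralizes
    by (simp add: m_part_def x\<^sub>k_def linear_scale[OF linear_\<Theta>] linear_add[OF linear_\<Theta>] \<Theta>_involutive
        bilinear_rmul[OF bilinear_br] bilinear_radd[OF bilinear_br] add.commute)
  moreover have "x = x\<^sub>p + x\<^sub>k"
    by (simp add: x\<^sub>p_def x\<^sub>k_def algebra_simps flip: scaleR_2)
  ultimately show ?thesis by (simp add: set_plus_intro)
qed

lemma zero_in_root_space: "0 \<in> root_space br A \<alpha>"
  by (simp add: root_space_def bilinear_rzero[OF bilinear_br])

text \<open>The operators \<open>ad h\<close>, \<open>h \<in> A\<close>, commute and are self-adjoint for \<open>cartan_form\<close>; a joint
  eigenvector \<open>x \<noteq> 0\<close> has the linear eigenvalue functional \<open>h \<mapsto> B\<^sub>\<Theta>([h, x], x) / B\<^sub>\<Theta>(x, x)\<close>.\<close>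

lemma root_space_decomposition: "UNIV \<subseteq> span (\<Union>{root_space br A \<alpha> | \<alpha>. linear \<alpha>})"
proof -
  note Q = bilinear_cartan_form[OF lie_algebra cartan_involution]
  have "UNIV \<subseteq> span {x \<in> UNIV. \<forall>h\<in>A. \<exists>l. br h x = l *\<^sub>R x}"
    by (rule commuting_selfadjoint_joint_eigenvectors_span[where T=br and I=A, OF Q
          cartan_form_commute[OF lie_algebra cartan_involution] cartan_form_pos[OF cartan_involution]
          lie_algebra_linear_right[OF lie_algebra]
          cartan_form_ad_selfadjoint[OF lie_algebra cartan_involution \<Theta>_A]
          lie_algebra_ad_commute[OF lie_algebra A_abelian]]) auto
  also have "\<dots> \<subseteq> span (\<Union>{root_space br A \<alpha> | \<alpha>. linear \<alpha>})"
  proof (rule span_mono, safe)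
    fix x assume eigen: "\<forall>h\<in>A. \<exists>l. br h x = l *\<^sub>R x"
    define \<alpha> where "\<alpha> h = cartan_form br \<Theta> (br h x) x / cartan_form br \<Theta> x x" for h
    have "linear \<alpha>"
      by (rule linearI) (simp_all add: \<alpha>_def bilinear_ladd[OF bilinear_br] bilinear_lmul[OF bilinear_br]
          bilinear_ladd[OF Q] bilinear_lmul[OF Q] add_divide_distrib)
    moreover have "x \<in> root_space br A \<alpha>"
    proof (cases "x = 0")
      case False
      show ?thesis
        unfolding root_space_def
      proof (intro CollectI ballI)
        fix h assume "h \<in> A"
        then obtain l where l: "br h x = l *\<^sub>R x" using eigen by blast
        then have "\<alpha> h = l"
          using cartan_form_pos[OF cartan_involution False] by (simp add: \<alpha>_def bilinear_lmul[OF Q])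
        then show "br h x = \<alpha> h *\<^sub>R x" using l by simp
      qed
    qed (simp add: zero_in_root_space)
    ultimately show "x \<in> \<Union>{root_space br A \<alpha> | \<alpha>. linear \<alpha>}" by blast
  qed
  finally show ?thesis .
qed

lemma restricted_root_uminus:
  assumes "restricted_root br A \<alpha>"
  shows "restricted_root br A (\<lambda>h. - \<alpha> h)"
proof -
  obtain x where x: "x \<in> root_space br A \<alpha>" "x \<noteq> 0"
    using assms zero_in_root_space[of \<alpha>] by (auto simp: restricted_root_def)
  have "\<Theta> x \<noteq> 0"
    using x(2) \<Theta>_involutive[of x] by (auto simp: linear_0[OF linear_\<Theta>])
  then show ?thesis
    using assms \<Theta>_root_space[OF x(1)] by (auto simp: restricted_root_def linear_compose_neg)
qed

lemma zero_in_m_part: "0 \<in> m_part br \<Theta> A"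
  by (simp add: m_part_def linear_0[OF linear_\<Theta>] bilinear_rzero[OF bilinear_br])

lemma sum_in_minimal_parabolic:
  "a \<in> A \<Longrightarrow> m \<in> m_part br \<Theta> A \<Longrightarrow> s \<in> s_plus br A h0 \<Longrightarrow> a + m + s \<in> minimal_parabolic br \<Theta> A h0"
  unfolding minimal_parabolic_def by (intro set_plus_intro)

lemma A_m_subset_minimal_parabolic: "A + m_part br \<Theta> A \<subseteq> minimal_parabolic br \<Theta> A h0"
  using sum_in_minimal_parabolic[of _ _ 0] by (auto simp: s_plus_def span_zero elim!: set_plus_elim)

lemma A_subset_minimal_parabolic: "A \<subseteq> minimal_parabolic br \<Theta> A h0"
  using sum_in_minimal_parabolic[of _ 0 0] zero_in_m_part by (auto simp: s_plus_def span_zero)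

lemma positive_root_space_subset_minimal_parabolic:
  assumes "restricted_root br A \<alpha>" "\<alpha> h0 > 0"
  shows "root_space br A \<alpha> \<subseteq> minimal_parabolic br \<Theta> A h0"
proof
  fix x assume "x \<in> root_space br A \<alpha>"
  then have "x \<in> s_plus br A h0"
    unfolding s_plus_def using assms by (intro span_base) blast
  then show "x \<in> minimal_parabolic br \<Theta> A h0"
    using sum_in_minimal_parabolic[OF subspace_0[OF subspace_A] zero_in_m_part] by simp
qed

text \<open>With \<open>H = [\<Theta> F, F]\<close>, invariance of the Killing form gives \<open>B(h, H) = \<alpha>(h) B\<^sub>\<Theta>(F, F)\<close>
  for \<open>h \<in> A\<close>, hence \<open>H \<noteq> 0\<close> and \<open>\<alpha>(H) B\<^sub>\<Theta>(F, F) = B\<^sub>\<Theta>(H, H) > 0\<close>.\<close>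

lemma bracket_\<Theta>_root_vector:
  assumes \<alpha>: "restricted_root br A \<alpha>" and F: "F \<in> root_space br A \<alpha>" "F \<noteq> 0"
  shows "br (\<Theta> F) F \<in> A" and "\<alpha> (br (\<Theta> F) F) \<noteq> 0"
proof -
  define E H where "E = \<Theta> F" and "H = br E F"
  note K = bilinear_killing[OF lie_algebra]
  have F_eigen: "br h F = \<alpha> h *\<^sub>R F" if "h \<in> A" for h
    using F that by (simp add: root_space_def)
  have E_eigen: "br h E = - \<alpha> h *\<^sub>R E" if "h \<in> A" for h
    using \<Theta>_root_space[OF F(1)] that by (simp add: E_def root_space_def)
  have "br h H = 0" if "h \<in> A" for h
    using lie_algebra_leibniz[OF lie_algebra, of h E F] E_eigen[OF that] F_eigen[OF that]
    by (simp add: H_def bilinear_lneg[OF bilinear_br] bilinear_lmul[OF bilinear_br] bilinear_rmul[OF bilinear_br])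
  moreover have \<Theta>H: "\<Theta> H = - H"
    using lie_algebra_anticomm[OF lie_algebra, of F E]
    by (simp add: H_def E_def \<Theta>_bracket \<Theta>_involutive)
  ultimately have "H \<in> A" by (rule centralizer_in_p_subset_A[rotated])
  then show "br (\<Theta> F) F \<in> A" by (simp add: H_def E_def)
  have killing_H: "killing br h H = \<alpha> h * cartan_form br \<Theta> F F" if "h \<in> A" for h
  proof -
    have "killing br h H = killing br (br h E) F"
      unfolding H_def by (rule killing_invariant[OF lie_algebra, symmetric])
    also have "\<dots> = - \<alpha> h * killing br E F"
      using E_eigen[OF that] by (simp add: bilinear_lneg[OF K] bilinear_lmul[OF K])
    also have "killing br E F = - cartan_form br \<Theta> F F"
      by (simp add: E_def cartan_form_def killing_commute[OF lie_algebra])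
    finally show ?thesis by simp
  qed
  have "\<alpha> H \<noteq> 0"
  proof (cases "H = 0")
    case True
    obtain h where "h \<in> A" "\<alpha> h \<noteq> 0" using \<alpha> by (auto simp: restricted_root_def)
    then show ?thesis
      using True killing_H cartan_form_pos[OF cartan_involution F(2)] by (simp add: bilinear_rzero[OF K])
  next
    case False
    have "cartan_form br \<Theta> H H = killing br H H"
      using \<Theta>H by (simp add: cartan_form_def bilinear_rneg[OF K])
    then show ?thesis
      using killing_H[OF \<open>H \<in> A\<close>] cartan_form_pos[OF cartan_involution False] by auto
  qed
  then show "\<alpha> (br (\<Theta> F) F) \<noteq> 0" by (simp add: H_def E_def)
qed

lemma lie_rep_root_vector_image:
  assumes \<pi>: "lie_rep br \<pi>" and h0: "regular_element br A h0"
    and "linear \<alpha>" and x: "x \<in> root_space br A \<alpha>"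
  shows "\<pi> x v \<in> span {\<pi> y u | y u. y \<in> minimal_parabolic br \<Theta> A h0}"
proof -
  let ?W = "span {\<pi> y u | y u. y \<in> minimal_parabolic br \<Theta> A h0}"
  have in_W: "\<pi> y u \<in> ?W" if "y \<in> minimal_parabolic br \<Theta> A h0" for y u
    using that by (intro span_base) blast
  consider "\<forall>h\<in>A. \<alpha> h = 0" | "x = 0"
    | "restricted_root br A \<alpha>" "\<alpha> h0 > 0" | "restricted_root br A \<alpha>" "\<alpha> h0 < 0" "x \<noteq> 0"
    using x h0 \<open>linear \<alpha>\<close> zero_in_root_space[of \<alpha>]
    by (fastforce simp: restricted_root_def regular_element_def)
  then show ?thesis
  proof cases
    case 1
    then show ?thesis
      using zero_root_space_subset[OF x] A_m_subset_minimal_parabolic in_W by blast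
  next
    case 2
    have "\<pi> 0 v = 0" using lie_rep_scaleR[OF \<pi>, of 0] by simp
    then show ?thesis using 2 by (simp add: span_zero)
  next
    case 3
    then show ?thesis
      using positive_root_space_subset_minimal_parabolic x in_W by blast
  next
    case 4
    define H where "H = br (\<Theta> x) x"
    have "H \<in> A" "\<alpha> H \<noteq> 0"
      using bracket_\<Theta>_root_vector[OF 4(1) x 4(3)] by (simp_all add: H_def)
    moreover have "\<Theta> x \<in> minimal_parabolic br \<Theta> A h0"
      using positive_root_space_subset_minimal_parabolic[OF restricted_root_uminus[OF 4(1)]]
        \<Theta>_root_space[OF x] 4(2) by auto
    moreover have "br H x = \<alpha> H *\<^sub>R x"
      using x \<open>H \<in> A\<close> by (simp add: root_space_def)
    ultimately show ?thesis
      using A_subset_minimal_parabolic in_W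
      by (intro lie_rep_sl2_image_in_subspace[OF \<pi> H_def[symmetric]]) (auto simp: subspace_span)
  qed
qed

end

theorem lemma2p7:
  fixes br :: "'g::euclidean_space \<Rightarrow> 'g \<Rightarrow> 'g"
    and \<Theta> :: "'g \<Rightarrow> 'g"
    and A :: "'g set"
    and h0 :: 'g
    and \<pi> :: "'g \<Rightarrow> 'v::euclidean_space \<Rightarrow> 'v"
  assumes "semisimple br"
    and "\<forall>I. \<not> compact_ideal br I"
    and "cartan_involution br \<Theta>"
    and "max_abelian_in_p br \<Theta> A"
    and "regular_element br A h0"
    and "lie_rep br \<pi>"
  shows "span {\<pi> x v | x v. True} =
         span {\<pi> x v | x v. x \<in> A + m_part br \<Theta> A + s_plus br A h0}"
proof -
  interpret cartan_setting br \<Theta> A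
    using assms(1,3,4) by unfold_locales (simp_all add: semisimple_def)
  let ?W = "span {\<pi> y u | y u. y \<in> minimal_parabolic br \<Theta> A h0}"
  have "\<pi> x v \<in> ?W" for x v
  proof -
    have "linear (\<lambda>x. \<pi> x v)" using assms(6) by (simp add: lie_rep_def)
    then have "subspace {x. \<pi> x v \<in> ?W}"
      by (rule linear_subspace_linear_preimage) (rule subspace_span)
    then have "span (\<Union>{root_space br A \<alpha> | \<alpha>. linear \<alpha>}) \<subseteq> {x. \<pi> x v \<in> ?W}"
      using lie_rep_root_vector_image[OF assms(6,5)] by (intro span_minimal) auto
    then show ?thesis using root_space_decomposition by blast
  qed
  then show ?thesis
    unfolding minimal_parabolic_def[symmetric]
    by (intro subset_antisym span_minimal span_mono) (auto simp: subspace_span)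
qed

end
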